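(* Let $\mathbb F(2,3;5)$ be the manifold of partial flags $X\subset Y\subset\mathbb C^5$ with $\dim X=2$, $\dim Y=3$. Set $a=K_2(4)$, $b=K_2(1)$, $c=K_2(-5)$, $A=K_3(0)$, $B=K_3(3)$, $C=K_3(-1)$. Then there are exactly four flags $X\subset Y$ in $\mathbb F(2,3;5)$ such that $X$ meets each of $a,B,C$ nontrivially, $\dim(Y\cap A)\ge2$, and $Y$ meets each of $b,c$ nontrivially; exactly two of these four flags are real and the other two are not real.
   Context: For $s\in\mathbb C$, $K_i(s)\subset\mathbb C^5$ denotes the row span of the first $i$ rows of the $5\times5$ matrix with $(i,j)$ entry $\binom{j-1}{i-1}s^{j-i}$ (zero for $j<i$); this is the $i$-dimensional subspace osculating the rational normal curve $\gamma(s)=(1,s,s^2,s^3,s^4)$ at $\gamma(s)$. "Meets nontrivially" means the intersection is not $\{0\}$. A flag is real if both subspaces are spanned by real vectors. *)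

theory Defs
  imports "HOL-Analysis.Analysis"
begin

text \<open>Row r (0-indexed, r < 5) of the 5x5 matrix with (i,j) entry
  binom(j-1,i-1) s^(j-i) (zero for j < i), with 1-indexed i = r+1, j = c+1.\<close>
definition osc_row :: "nat \<Rightarrow> complex \<Rightarrow> complex ^ 5" where
  "osc_row r s = vector (map (\<lambda>c. if r \<le> c then of_nat (c choose r) * s ^ (c - r) else 0) [0..<5])"

definition K :: "nat \<Rightarrow> complex \<Rightarrow> (complex ^ 5) set" where
  "K i s = vec.span {osc_row r s | r. r < i}"

definition meets :: "(complex ^ 5) set \<Rightarrow> (complex ^ 5) set \<Rightarrow> bool" where
  "meets U V \<longleftrightarrow> U \<inter> V \<noteq> {0}"

definition real_subspace :: "(complex ^ 5) set \<Rightarrow> bool" where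
  "real_subspace U \<longleftrightarrow> (\<exists>S. (\<forall>v\<in>S. \<forall>j. Im (v $ j) = 0) \<and> U = vec.span S)"

definition flag23 :: "(complex ^ 5) set \<Rightarrow> (complex ^ 5) set \<Rightarrow> bool" where
  "flag23 X Y \<longleftrightarrow> vec.subspace X \<and> vec.subspace Y \<and> X \<subseteq> Y \<and> vec.dim X = 2 \<and> vec.dim Y = 3"

end

theory Submission
  imports Defs
begin

text \<open>
  Since Y meets K_3(0) = {v. v_4 = v_5 = 0} in dimension at least two, the last two coordinates
  of the vectors of Y are proportional, i.e. Y lies in a hyperplane a v_5 = b v_4. Each tangent
  line K_2(s), s \<noteq> 0, meets that hyperplane in a single point, so Y is spanned by the points
  for s = 1, -5, 4, and X contains the point for s = 4. Inside Y the planes K_3(3) and K_3(-1)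
  also cut out single points, which must lie in the 2-plane X. The linear dependence of these
  three points of X is a condition of degree seven on (a : b) which forces a \<noteq> 0 and makes
  t = b / a a root of the quartic 31 t^4 + 54 t^3 - 201 t^2 - 2464 t + 3840; conversely every
  root gives a solution, and distinct roots give distinct flags. By the intermediate value
  theorem the quartic has two real roots; its remaining quadratic factor has negative
  discriminant. Finally the flag is real exactly when t is: Y lies in the hyperplane
  v_5 = t v_4, and a real subspace is closed under complex conjugation.
\<close>

section \<open>Linear algebra in coordinates\<close>

lemma exhaust_5:
  fixes x :: 5
  shows "x = 1 \<or> x = 2 \<or> x = 3 \<or> x = 4 \<or> x = 5"
proof (induct x)
  case (of_int z)
  then have "z = 0 \<or> z = 1 \<or> z = 2 \<or> z = 3 \<or> z = 4" by fastforce
  then show ?case by auto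
qed

lemma forall_5: "(\<forall>i::5. P i) \<longleftrightarrow> P 1 \<and> P 2 \<and> P 3 \<and> P 4 \<and> P 5"
  by (metis exhaust_5)

lemma vector_5 [simp]:
  "(vector [x1, x2, x3, x4, x5] :: ('a::zero)^5) $ 1 = x1"
  "(vector [x1, x2, x3, x4, x5] :: ('a::zero)^5) $ 2 = x2"
  "(vector [x1, x2, x3, x4, x5] :: ('a::zero)^5) $ 3 = x3"
  "(vector [x1, x2, x3, x4, x5] :: ('a::zero)^5) $ 4 = x4"
  "(vector [x1, x2, x3, x4, x5] :: ('a::zero)^5) $ 5 = x5"
  unfolding vector_def by simp_all

lemma vec_eq_5I:
  fixes x y :: "'a^5"
  assumes "x $ 1 = y $ 1" "x $ 2 = y $ 2" "x $ 3 = y $ 3" "x $ 4 = y $ 4" "x $ 5 = y $ 5"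
  shows "x = y"
  using assms by (simp add: vec_eq_iff forall_5)

lemma mem_vec_span_2_iff:
  "x \<in> vec.span {p, q} \<longleftrightarrow> (\<exists>c d. x = c *s p + d *s q)"
proof -
  have "x \<in> vec.span {p, q} \<longleftrightarrow> (\<exists>c d. x - c *s p - d *s q = 0)"
    by (simp add: vec.span_insert)
  then show ?thesis
    by (simp add: diff_diff_eq)
qed

lemma mem_vec_span_3_iff:
  "x \<in> vec.span {p, q, r} \<longleftrightarrow> (\<exists>c d e. x = c *s p + d *s q + e *s r)"
proof -
  have "x \<in> vec.span {p, q, r} \<longleftrightarrow> (\<exists>c d e. x - c *s p - d *s q - e *s r = 0)"
    by (simp add: vec.span_insert)
  then show ?thesis
    by (simp add: diff_diff_eq add.assoc)
qed

lemma vec_subspace_scale_iff: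
  assumes "vec.subspace S" "c \<noteq> 0"
  shows "c *s x \<in> S \<longleftrightarrow> x \<in> S"
  using vec.subspace_scale[OF assms(1), of "c *s x" "inverse c"] vec.subspace_scale[OF assms(1)] assms(2)
  by auto

definition lin_indep2 :: "'a::field^'n \<Rightarrow> 'a^'n \<Rightarrow> bool" where
  "lin_indep2 x y \<longleftrightarrow> (\<forall>c d. c *s x + d *s y = 0 \<longrightarrow> c = 0 \<and> d = 0)"

definition lin_indep3 :: "'a::field^'n \<Rightarrow> 'a^'n \<Rightarrow> 'a^'n \<Rightarrow> bool" where
  "lin_indep3 x y z \<longleftrightarrow>
     (\<forall>c d e. c *s x + d *s y + e *s z = 0 \<longrightarrow> c = 0 \<and> d = 0 \<and> e = 0)"

lemma lin_indep2_imp_independent: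
  assumes "lin_indep2 x y"
  shows "vec.independent {x, y}" "card {x, y} = 2"
proof -
  have "x \<noteq> y"
    using assms[unfolded lin_indep2_def, rule_format, of 1 "-1"] by auto
  then show "vec.independent {x, y}" "card {x, y} = 2"
    using assms by (auto simp: vec.dependent_finite lin_indep2_def)
qed

lemma lin_indep3_imp_independent:
  assumes "lin_indep3 x y z"
  shows "vec.independent {x, y, z}" "card {x, y, z} = 3"
proof -
  have "x \<noteq> y" "x \<noteq> z" "y \<noteq> z"
    using assms[unfolded lin_indep3_def, rule_format, of 1 "-1" 0]
      assms[unfolded lin_indep3_def, rule_format, of 1 0 "-1"]
      assms[unfolded lin_indep3_def, rule_format, of 0 1 "-1"] by auto
  then show "vec.independent {x, y, z}" "card {x, y, z} = 3"
    using assms by (auto simp: vec.dependent_finite lin_indep3_def add.assoc)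
qed

lemma vec_dim_ge_3:
  assumes "lin_indep3 x y z" "x \<in> V" "y \<in> V" "z \<in> V"
  shows "3 \<le> vec.dim V"
  using vec.independent_card_le_dim[of "{x, y, z}" V] lin_indep3_imp_independent[OF assms(1)] assms(2-4)
  by simp

lemma vec_dim_span_2: "lin_indep2 x y \<Longrightarrow> vec.dim (vec.span {x, y}) = 2"
  using lin_indep2_imp_independent vec.dim_span_eq_card_independent by metis

lemma vec_dim_span_3: "lin_indep3 x y z \<Longrightarrow> vec.dim (vec.span {x, y, z}) = 3"
  using lin_indep3_imp_independent vec.dim_span_eq_card_independent by metis

lemma vec_subspace_eq_span_2:
  assumes "vec.subspace V" "vec.dim V = 2" "x \<in> V" "y \<in> V" "lin_indep2 x y"
  shows "V = vec.span {x, y}"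
  using assms lin_indep2_imp_independent[OF assms(5)]
  by (intro equalityI vec.card_ge_dim_independent vec.span_minimal) auto

lemma vec_subspace_eq_span_3:
  assumes "vec.subspace V" "vec.dim V = 3" "x \<in> V" "y \<in> V" "z \<in> V" "lin_indep3 x y z"
  shows "V = vec.span {x, y, z}"
  using assms lin_indep3_imp_independent[OF assms(6)]
  by (intro equalityI vec.card_ge_dim_independent vec.span_minimal) auto

definition minor2 :: "'a::comm_ring^'n \<Rightarrow> 'a^'n \<Rightarrow> 'n \<Rightarrow> 'n \<Rightarrow> 'a" where
  "minor2 x y i j = x $ i * y $ j - x $ j * y $ i"

definition minor3 :: "'a::comm_ring^'n \<Rightarrow> 'a^'n \<Rightarrow> 'a^'n \<Rightarrow> 'n \<Rightarrow> 'n \<Rightarrow> 'n \<Rightarrow> 'a" where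
  "minor3 x y z i j k =
     x $ i * (y $ j * z $ k - y $ k * z $ j) - y $ i * (x $ j * z $ k - x $ k * z $ j)
       + z $ i * (x $ j * y $ k - x $ k * y $ j)"

lemma lin_indep2_if_minor2: "minor2 x y i j \<noteq> 0 \<Longrightarrow> lin_indep2 x y"
  unfolding lin_indep2_def
proof (intro allI impI)
  fix c d assume "minor2 x y i j \<noteq> 0" and "c *s x + d *s y = 0"
  then have "c * x $ i + d * y $ i = 0" "c * x $ j + d * y $ j = 0"
    by (metis vector_add_component vector_smult_component zero_index)+
  then have "c * minor2 x y i j = 0" "d * minor2 x y i j = 0"
    unfolding minor2_def by algebra+
  then show "c = 0 \<and> d = 0"
    using \<open>minor2 x y i j \<noteq> 0\<close> by simp
qed

lemma lin_indep3_if_minor3: "minor3 x y z i j k \<noteq> 0 \<Longrightarrow> lin_indep3 x y z"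
  unfolding lin_indep3_def
proof (intro allI impI)
  fix c d e assume "minor3 x y z i j k \<noteq> 0" and "c *s x + d *s y + e *s z = 0"
  then have "c * x $ l + d * y $ l + e * z $ l = 0" for l
    by (metis vector_add_component vector_smult_component zero_index)
  from this[of i] this[of j] this[of k]
  have "c * minor3 x y z i j k = 0" "d * minor3 x y z i j k = 0" "e * minor3 x y z i j k = 0"
    unfolding minor3_def by (algebra, algebra, algebra)
  then show "c = 0 \<and> d = 0 \<and> e = 0"
    using \<open>minor3 x y z i j k \<noteq> 0\<close> by simp
qed

lemma minor3_eq_0_if_dim_2:
  assumes "vec.dim V = 2" "x \<in> V" "y \<in> V" "z \<in> V"
  shows "minor3 x y z i j k = 0"
  using vec_dim_ge_3[OF lin_indep3_if_minor3 assms(2-4)] assms(1) by fastforce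

text \<open>If y broke the proportionality, x and y would add two dimensions to Y \<inter> A.\<close>
lemma coordinate_pairs_proportional:
  fixes Y :: "('a::field^'n) set" and i j :: 'n
  defines "A \<equiv> {v. v $ i = 0 \<and> v $ j = 0}"
  assumes Y: "vec.subspace Y" "vec.dim Y \<le> vec.dim (Y \<inter> A) + 1"
    and x: "x \<in> Y" "x \<notin> A" and y: "y \<in> Y"
  shows "x $ i * y $ j = x $ j * y $ i"
proof (rule ccontr)
  assume nonprop: "x $ i * y $ j \<noteq> x $ j * y $ i"
  define H where "H = {v. x $ i * v $ j = x $ j * v $ i}"
  have "vec.subspace H" "vec.subspace A"
    by (auto simp: H_def A_def vec.subspace_def algebra_simps)
  have "vec.subspace (Y \<inter> A)"
    using Y(1) \<open>vec.subspace A\<close> by (rule vec.subspace_inter)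
  then have "x \<notin> vec.span (Y \<inter> A)"
    using x(2) by (metis IntD2 vec.span_eq_iff)
  moreover have "vec.span (insert x (Y \<inter> A)) \<subseteq> H"
    using \<open>vec.subspace H\<close> by (intro vec.span_minimal) (auto simp: H_def A_def mult.commute)
  then have "y \<notin> vec.span (insert x (Y \<inter> A))"
    using nonprop by (auto simp: H_def)
  ultimately have "vec.dim (insert y (insert x (Y \<inter> A))) = vec.dim (Y \<inter> A) + 2"
    by (simp add: vec.dim_insert)
  moreover have "vec.dim (insert y (insert x (Y \<inter> A))) \<le> vec.dim Y"
    using x y by (intro vec.dim_subset) auto
  ultimately show False
    using Y(2) by simp
qed

lemma ex_multiple_if_det2_eq_0:
  fixes p q c d :: "'a::field"
  assumes "p * d = q * c" "c \<noteq> 0 \<or> d \<noteq> 0"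
  shows "\<exists>l. p = l * c \<and> q = l * d"
proof (cases "c = 0")
  case True
  with assms show ?thesis
    by (intro exI[of _ "q / d"]) (auto simp: field_simps)
next
  case False
  with assms show ?thesis
    by (intro exI[of _ "p / c"]) (auto simp: field_simps)
qed

lemma ex_multiple_of_cross:
  fixes x1 x2 x3 r1 r2 r3 s1 s2 s3 :: "'a::field"
  defines "n1 \<equiv> r2 * s3 - r3 * s2" and "n2 \<equiv> r3 * s1 - r1 * s3"
    and "n3 \<equiv> r1 * s2 - r2 * s1"
  assumes "x1 * r1 + x2 * r2 + x3 * r3 = 0" "x1 * s1 + x2 * s2 + x3 * s3 = 0"
    and "n1 \<noteq> 0 \<or> n2 \<noteq> 0 \<or> n3 \<noteq> 0"
  shows "\<exists>l. x1 = l * n1 \<and> x2 = l * n2 \<and> x3 = l * n3"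
proof -
  have "x1 * n2 = x2 * n1" "x1 * n3 = x3 * n1" "x2 * n3 = x3 * n2"
    using assms(4,5) unfolding n1_def n2_def n3_def by algebra+
  with assms(6) consider "n1 \<noteq> 0" | "n2 \<noteq> 0" | "n3 \<noteq> 0" by blast
  then show ?thesis
  proof cases
    case 1
    then show ?thesis using \<open>x1 * n2 = x2 * n1\<close> \<open>x1 * n3 = x3 * n1\<close>
      by (intro exI[of _ "x1 / n1"]) (auto simp: field_simps)
  next
    case 2
    then show ?thesis using \<open>x1 * n2 = x2 * n1\<close> \<open>x2 * n3 = x3 * n2\<close>
      by (intro exI[of _ "x2 / n2"]) (auto simp: field_simps)
  next
    case 3
    then show ?thesis using \<open>x1 * n3 = x3 * n1\<close> \<open>x2 * n3 = x3 * n2\<close>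
      by (intro exI[of _ "x3 / n3"]) (auto simp: field_simps)
  qed
qed

definition vec_cnj :: "complex^'n \<Rightarrow> complex^'n" where
  "vec_cnj v = (\<chi> j. cnj (v $ j))"

lemma vec_cnj_simps [simp]:
  "vec_cnj 0 = 0" "vec_cnj (x + y) = vec_cnj x + vec_cnj y" "vec_cnj (c *s x) = cnj c *s vec_cnj x"
  by (simp_all add: vec_cnj_def vec_eq_iff)

lemma vec_cnj_in_span:
  assumes "\<forall>v\<in>S. \<forall>j. Im (v $ j) = 0" "x \<in> vec.span S"
  shows "vec_cnj x \<in> vec.span S"
proof -
  have "vec.subspace {v. vec_cnj v \<in> vec.span S}"
    unfolding vec.subspace_def
    by (simp add: vec.span_zero vec.span_add vec.span_scale)
  moreover have "vec_cnj v = v" if "v \<in> S" for v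
    using assms(1) that by (simp add: vec_cnj_def vec_eq_iff complex_eq_iff)
  ultimately show ?thesis
    using vec.span_induct[OF assms(2), of "\<lambda>v. vec_cnj v \<in> vec.span S"] vec.span_base by force
qed

section \<open>Osculating spaces of the rational normal curve\<close>

lemma osc_row_0: "osc_row 0 s = vector [1, s, s^2, s^3, s^4]"
  by (simp add: osc_row_def upt_conv_Cons eval_nat_numeral power2_eq_square power3_eq_cube)

lemma osc_row_1: "osc_row 1 s = vector [0, 1, 2 * s, 3 * s^2, 4 * s^3]"
  by (simp add: osc_row_def upt_conv_Cons eval_nat_numeral power2_eq_square power3_eq_cube)

lemma osc_row_2: "osc_row 2 s = vector [0, 0, 1, 3 * s, 6 * s^2]"
  by (simp add: osc_row_def upt_conv_Cons eval_nat_numeral power2_eq_square)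

lemma K2_eq_span: "K 2 s = vec.span {osc_row 0 s, osc_row 1 s}"
proof -
  have "{osc_row r s | r. r < 2} = (\<lambda>r. osc_row r s) ` {..<2}"
    by auto
  also have "{..<2::nat} = {0, 1}"
    by (auto simp: numeral_2_eq_2 lessThan_Suc)
  finally show ?thesis
    by (simp add: K_def)
qed

lemma K3_eq_span: "K 3 s = vec.span {osc_row 0 s, osc_row 1 s, osc_row 2 s}"
proof -
  have "{osc_row r s | r. r < 3} = (\<lambda>r. osc_row r s) ` {..<3}"
    by auto
  also have "{..<3::nat} = {0, 1, 2}"
    by (auto simp: numeral_3_eq_3 numeral_2_eq_2 lessThan_Suc)
  finally show ?thesis
    by (simp add: K_def)
qed

lemma subspace_K [simp]: "vec.subspace (K i s)"
  by (simp add: K_def)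

lemma meetsI: "v \<in> U \<Longrightarrow> v \<in> V \<Longrightarrow> v \<noteq> 0 \<Longrightarrow> meets U V"
  by (auto simp: meets_def)

lemma meetsE:
  assumes "meets U V" "vec.subspace U" "vec.subspace V"
  obtains v where "v \<in> U" "v \<in> V" "v \<noteq> 0"
  using assms vec.subspace_0 by (auto simp: meets_def)

lemma mem_K2_iff:
  "v \<in> K 2 s \<longleftrightarrow>
     (\<exists>p q. v = p *s vector [1, s, s^2, s^3, s^4] + q *s vector [0, 1, 2 * s, 3 * s^2, 4 * s^3])"
  unfolding K2_eq_span mem_vec_span_2_iff osc_row_0 osc_row_1 ..

text \<open>K_3(s) is spanned by the curve point and its first two derivatives at s, so it is
  annihilated by the coefficient vectors of (x - s)^3 and x (x - s)^3.\<close>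

definition K3_form0 :: "complex \<Rightarrow> complex^5 \<Rightarrow> complex" where
  "K3_form0 s v = - (s^3) * v $ 1 + 3 * s^2 * v $ 2 - 3 * s * v $ 3 + v $ 4"

definition K3_form1 :: "complex \<Rightarrow> complex^5 \<Rightarrow> complex" where
  "K3_form1 s v = - (s^3) * v $ 2 + 3 * s^2 * v $ 3 - 3 * s * v $ 4 + v $ 5"

lemma K3_forms_linear [simp]:
  "K3_form0 s (v + w) = K3_form0 s v + K3_form0 s w"
  "K3_form0 s (v - w) = K3_form0 s v - K3_form0 s w"
  "K3_form0 s (c *s v) = c * K3_form0 s v"
  "K3_form1 s (v + w) = K3_form1 s v + K3_form1 s w"
  "K3_form1 s (v - w) = K3_form1 s v - K3_form1 s w"
  "K3_form1 s (c *s v) = c * K3_form1 s v"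
  by (simp_all add: K3_form0_def K3_form1_def algebra_simps)

lemma mem_K3_iff: "v \<in> K 3 s \<longleftrightarrow> K3_form0 s v = 0 \<and> K3_form1 s v = 0"
proof
  assume "v \<in> K 3 s"
  then obtain p q r where v: "v = p *s osc_row 0 s + q *s osc_row 1 s + r *s osc_row 2 s"
    by (auto simp: K3_eq_span mem_vec_span_3_iff)
  show "K3_form0 s v = 0 \<and> K3_form1 s v = 0"
    unfolding v osc_row_0 osc_row_1 osc_row_2 K3_form0_def K3_form1_def
    by (simp, intro conjI; algebra)
next
  assume "K3_form0 s v = 0 \<and> K3_form1 s v = 0"
  then have v4: "v $ 4 = s^3 * v $ 1 - 3 * s^2 * v $ 2 + 3 * s * v $ 3"
    and v5: "v $ 5 = s^3 * v $ 2 - 3 * s^2 * v $ 3 + 3 * s * v $ 4"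
    by (simp_all add: K3_form0_def K3_form1_def algebra_simps)
  have "v = v $ 1 *s osc_row 0 s + (v $ 2 - s * v $ 1) *s osc_row 1 s
      + (v $ 3 - 2 * s * v $ 2 + s^2 * v $ 1) *s osc_row 2 s"
    unfolding osc_row_0 osc_row_1 osc_row_2
    by (intro vec_eq_5I; unfold vector_add_component vector_smult_component vector_5 v5 v4; algebra)
  then show "v \<in> K 3 s"
    unfolding K3_eq_span mem_vec_span_3_iff by blast
qed

lemma K3_0_eq: "K 3 0 = {v. v $ 4 = 0 \<and> v $ 5 = 0}"
  by (auto simp: mem_K3_iff K3_form0_def K3_form1_def)

section \<open>Points of osculating spaces in a hyperplane\<close>

text \<open>The point in which the tangent line K_2(s) meets the hyperplane a v_5 = b v_4.\<close>
definition tangent_point :: "complex \<Rightarrow> complex \<Rightarrow> complex \<Rightarrow> complex^5" where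
  "tangent_point s a b =
     vector [4 * a * s - 3 * b, 3 * a * s^2 - 2 * b * s, 2 * a * s^3 - b * s^2, a * s^4, b * s^4]"

lemma tangent_point_eq:
  "tangent_point s a b = (4 * a * s - 3 * b) *s vector [1, s, s^2, s^3, s^4]
     + (b * s - a * s^2) *s vector [0, 1, 2 * s, 3 * s^2, 4 * s^3]"
  unfolding tangent_point_def
  by (intro vec_eq_5I; unfold vector_add_component vector_smult_component vector_5; algebra)

lemma tangent_point_in_K2: "tangent_point s a b \<in> K 2 s"
  unfolding mem_K2_iff tangent_point_eq by blast

lemma tangent_point_in_hyperplane: "a * tangent_point s a b $ 5 = b * tangent_point s a b $ 4"
  by (simp add: tangent_point_def)

lemma tangent_point_nonzero: "s \<noteq> 0 \<Longrightarrow> a \<noteq> 0 \<or> b \<noteq> 0 \<Longrightarrow> tangent_point s a b \<noteq> 0"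
  by (auto simp: tangent_point_def vec_eq_iff forall_5)

lemma K2_inter_K3_0:
  assumes "s \<noteq> 0" "v \<in> K 2 s" "v $ 4 = 0" "v $ 5 = 0"
  shows "v = 0"
proof -
  obtain p q where v: "v = p *s vector [1, s, s^2, s^3, s^4] + q *s vector [0, 1, 2 * s, 3 * s^2, 4 * s^3]"
    using assms(2) by (auto simp: mem_K2_iff)
  have "p * s^3 + 3 * q * s^2 = 0" "p * s^4 + 4 * q * s^3 = 0"
    using assms(3,4) by (simp_all add: v algebra_simps)
  then have "p = 0 \<and> q = 0"
    using assms(1) by algebra
  then show ?thesis
    by (simp add: v)
qed

lemma K2_inter_hyperplane:
  assumes "s \<noteq> 0" "a \<noteq> 0 \<or> b \<noteq> 0" "v \<in> K 2 s" "a * v $ 5 = b * v $ 4"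
  shows "\<exists>l. v = l *s tangent_point s a b"
proof -
  obtain p q where v: "v = p *s vector [1, s, s^2, s^3, s^4] + q *s vector [0, 1, 2 * s, 3 * s^2, 4 * s^3]"
    using assms(3) by (auto simp: mem_K2_iff)
  have "a * (p * s^4 + 4 * q * s^3) = b * (p * s^3 + 3 * q * s^2)"
    using assms(4) by (simp add: v algebra_simps)
  then have "p * (b * s - a * s^2) = q * (4 * a * s - 3 * b)"
    using assms(1) by algebra
  moreover have "4 * a * s - 3 * b \<noteq> 0 \<or> b * s - a * s^2 \<noteq> 0"
    using assms(1,2) by algebra
  ultimately obtain l where pq: "p = l * (4 * a * s - 3 * b)" "q = l * (b * s - a * s^2)"
    using ex_multiple_if_det2_eq_0 by blast
  have "v = l *s tangent_point s a b"
    unfolding v pq tangent_point_eq by (simp only: vector_add_ldistrib vector_smult_assoc)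
  then show ?thesis ..
qed

lemma tangent_point_mem:
  assumes "vec.subspace S" "\<forall>v\<in>S. a * v $ 5 = b * v $ 4" "meets S (K 2 s)"
    and "s \<noteq> 0" "a \<noteq> 0 \<or> b \<noteq> 0"
  shows "tangent_point s a b \<in> S"
proof -
  obtain v where v: "v \<in> S" "v \<in> K 2 s" "v \<noteq> 0"
    using assms(1,3) by (auto elim: meetsE)
  then obtain l where "v = l *s tangent_point s a b"
    using K2_inter_hyperplane assms(2,4,5) by blast
  with v assms(1) show ?thesis
    using vec_subspace_scale_iff by fastforce
qed

definition K3_coeffs :: "complex \<Rightarrow> complex^5 \<Rightarrow> complex^5 \<Rightarrow> complex^5 \<Rightarrow> complex^3" where
  "K3_coeffs s p q r = vector
     [K3_form0 s q * K3_form1 s r - K3_form0 s r * K3_form1 s q,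
      K3_form0 s r * K3_form1 s p - K3_form0 s p * K3_form1 s r,
      K3_form0 s p * K3_form1 s q - K3_form0 s q * K3_form1 s p]"

definition K3_meet :: "complex \<Rightarrow> complex^5 \<Rightarrow> complex^5 \<Rightarrow> complex^5 \<Rightarrow> complex^5" where
  "K3_meet s p q r =
     K3_coeffs s p q r $ 1 *s p + K3_coeffs s p q r $ 2 *s q + K3_coeffs s p q r $ 3 *s r"

lemma K3_meet_in_K3: "K3_meet s p q r \<in> K 3 s"
  unfolding mem_K3_iff K3_meet_def K3_coeffs_def by (simp add: algebra_simps)

lemma K3_meet_in_span: "K3_meet s p q r \<in> vec.span {p, q, r}"
  unfolding K3_meet_def mem_vec_span_3_iff by blast

lemma K3_meet_nonzero:
  assumes "lin_indep3 p q r" "K3_coeffs s p q r \<noteq> 0"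
  shows "K3_meet s p q r \<noteq> 0"
proof
  assume "K3_meet s p q r = 0"
  then have "\<forall>i. K3_coeffs s p q r $ i = 0"
    using assms(1) unfolding K3_meet_def lin_indep3_def forall_3 by blast
  with assms(2) show False
    by (simp add: vec_eq_iff)
qed

lemma mem_K3_imp_multiple_of_K3_meet:
  assumes "v \<in> vec.span {p, q, r}" "v \<in> K 3 s" "K3_coeffs s p q r \<noteq> 0"
  shows "\<exists>l. v = l *s K3_meet s p q r"
proof -
  obtain x y z where v: "v = x *s p + y *s q + z *s r"
    using assms(1) by (auto simp: mem_vec_span_3_iff)
  have "x * K3_form0 s p + y * K3_form0 s q + z * K3_form0 s r = 0"
    "x * K3_form1 s p + y * K3_form1 s q + z * K3_form1 s r = 0"
    using assms(2) by (simp_all add: v mem_K3_iff)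
  moreover have
    "K3_coeffs s p q r $ 1 \<noteq> 0 \<or> K3_coeffs s p q r $ 2 \<noteq> 0 \<or> K3_coeffs s p q r $ 3 \<noteq> 0"
    using assms(3) by (auto simp: vec_eq_iff forall_3)
  ultimately have "\<exists>l. x = l * K3_coeffs s p q r $ 1 \<and> y = l * K3_coeffs s p q r $ 2
      \<and> z = l * K3_coeffs s p q r $ 3"
    unfolding K3_coeffs_def vector_3 by (rule ex_multiple_of_cross)
  then obtain l where "x = l * K3_coeffs s p q r $ 1" "y = l * K3_coeffs s p q r $ 2"
      "z = l * K3_coeffs s p q r $ 3"
    by blast
  then have "v = l *s K3_meet s p q r"
    unfolding v K3_meet_def by (simp only: vector_add_ldistrib vector_smult_assoc)
  then show ?thesis ..
qed

lemma K3_meet_mem: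
  assumes "vec.subspace X" "X \<subseteq> vec.span {p, q, r}" "meets X (K 3 s)" "K3_coeffs s p q r \<noteq> 0"
  shows "K3_meet s p q r \<in> X"
proof -
  obtain v where v: "v \<in> X" "v \<in> K 3 s" "v \<noteq> 0"
    using assms(1,3) by (auto elim: meetsE)
  then obtain l where "v = l *s K3_meet s p q r"
    using mem_K3_imp_multiple_of_K3_meet assms(2,4) by blast
  with v assms(1) show ?thesis
    using vec_subspace_scale_iff by fastforce
qed

section \<open>The solution flags\<close>

definition flag_Y :: "complex \<Rightarrow> complex \<Rightarrow> (complex^5) set" where
  "flag_Y a b = vec.span {tangent_point 1 a b, tangent_point (-5) a b, tangent_point 4 a b}"

definition plane_point :: "complex \<Rightarrow> complex \<Rightarrow> complex \<Rightarrow> complex^5" where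
  "plane_point s a b = K3_meet s (tangent_point 1 a b) (tangent_point (-5) a b) (tangent_point 4 a b)"

definition flag_X :: "complex \<Rightarrow> complex \<Rightarrow> (complex^5) set" where
  "flag_X a b = vec.span {tangent_point 4 a b, plane_point 3 a b}"

definition flag_quartic :: "'a::comm_ring_1 \<Rightarrow> 'a \<Rightarrow> 'a" where
  "flag_quartic a b = 3840 * a^4 - 2464 * a^3 * b - 201 * a^2 * b^2 + 54 * a * b^3 + 31 * b^4"

lemma tangent_points_lin_indep:
  assumes "a \<noteq> 0 \<or> b \<noteq> 0"
  shows "lin_indep3 (tangent_point 1 a b) (tangent_point (-5) a b) (tangent_point 4 a b)"
    (is "lin_indep3 ?p ?q ?r")
proof (rule ccontr)
  assume "\<not> lin_indep3 ?p ?q ?r"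
  then have "minor3 ?p ?q ?r 2 3 4 = 0" "minor3 ?p ?q ?r 1 2 5 = 0" "minor3 ?p ?q ?r 1 2 3 = 0"
    using lin_indep3_if_minor3 by blast+
  then have "- 388800 * a^3 + 272160 * a^2 * b = 0" "29160 * a * b^2 - 20412 * b^3 = 0"
    "77760 * a^3 - 61236 * a^2 * b + 972 * b^3 = 0"
    by (simp_all add: minor3_def tangent_point_def; algebra)+
  then have "a = 0" "b = 0"
    by algebra+
  with assms show False
    by simp
qed

lemma plane_coeffs_nonzero:
  assumes "a \<noteq> 0 \<or> b \<noteq> 0" "s = 3 \<or> s = -1"
  shows "K3_coeffs s (tangent_point 1 a b) (tangent_point (-5) a b) (tangent_point 4 a b) \<noteq> 0"
    (is "?c \<noteq> 0")
proof
  assume "?c = 0"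
  then have "?c $ 1 = 0" "?c $ 2 = 0"
    by simp_all
  with assms(2) have "a = 0 \<and> b = 0"
    by (elim disjE; simp add: K3_coeffs_def K3_form0_def K3_form1_def tangent_point_def; algebra)
  with assms(1) show False
    by simp
qed

lemma plane_point_3:
  "plane_point 3 a b = vector
     [8398080 * a^3 - 8013168 * a^2 * b + 813564 * a * b^2 + 8748 * b^3,
      35691840 * a^3 - 33531084 * a^2 * b + 3297996 * a * b^2 + 157464 * b^3,
      104976000 * a^3 - 94215960 * a^2 * b + 6587244 * a * b^2 + 446148 * b^3,
      207852480 * a^3 - 158959908 * a^2 * b - 7794468 * a * b^2,
      207852480 * a^2 * b - 158959908 * a * b^2 - 7794468 * b^3]"
  unfolding plane_point_def K3_meet_def K3_coeffs_def
  by (intro vec_eq_5I; simp add: K3_form0_def K3_form1_def tangent_point_def; algebra)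

lemma plane_point_minus_1:
  "plane_point (-1) a b = vector
     [- 2799360 * a^3 + 804816 * a^2 * b + 1151820 * a * b^2 - 84564 * b^3,
      - 2566080 * a^3 + 562788 * a^2 * b + 848556 * a * b^2 + 17496 * b^3,
      4821120 * a^3 - 1813752 * a^2 * b - 1215972 * a * b^2 + 10692 * b^3,
      - 3965760 * a^3 + 2948076 * a^2 * b - 49572 * a * b^2,
      - 3965760 * a^2 * b + 2948076 * a * b^2 - 49572 * b^3]"
  unfolding plane_point_def K3_meet_def K3_coeffs_def
  by (intro vec_eq_5I; simp add: K3_form0_def K3_form1_def tangent_point_def; algebra)

lemma flag_quartic_if_minors_vanish:
  fixes a b :: complex
  defines "u \<equiv> tangent_point 4 a b" and "V \<equiv> plane_point 3 a b" and "W \<equiv> plane_point (-1) a b"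
  assumes "a \<noteq> 0 \<or> b \<noteq> 0"
    and "minor3 u V W 1 3 4 = 0" "minor3 u V W 2 3 4 = 0" "minor3 u V W 1 2 3 = 0"
  shows "a \<noteq> 0 \<and> flag_quartic a b = 0"
proof -
  have "minor3 u V W 1 3 4 = - 7313988648960000 * a^7 + 10452908777472000 * a^6 * b
      - 3443615235993600 * a^5 * b^2 - 320534600198400 * a^4 * b^3 + 28787946393600 * a^3 * b^4
      + 44661451334400 * a^2 * b^5 - 1054378944000 * a * b^6"
    and "minor3 u V W 2 3 4 = - 5224277606400000 * a^7 + 7009239121920000 * a^6 * b
      - 2073113077248000 * a^5 * b^2 - 264887200512000 * a^4 * b^3 + 9251324928000 * a^3 * b^4
      + 29522610432000 * a^2 * b^5"
    and "minor3 u V W 1 2 3 = 1044855521280000 * a^7 - 1493272682496000 * a^6 * b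
      + 473286899404800 * a^5 * b^2 + 70823654035200 * a^4 * b^3 - 11516539046400 * a^3 * b^4
      - 7326233049600 * a^2 * b^5 + 183666009600 * a * b^6 + 105437894400 * b^7"
    unfolding u_def V_def W_def minor3_def plane_point_3 plane_point_minus_1 tangent_point_def
    by (simp_all only: vector_5; algebra)+
  with assms(5-7) have "a \<noteq> 0" "flag_quartic a b = 0"
    using assms(4) unfolding flag_quartic_def by algebra+
  then show ?thesis ..
qed

lemma flag_X_generators_lin_indep: "lin_indep2 (tangent_point 4 1 t) (plane_point 3 1 t)"
  (is "lin_indep2 ?u ?V")
proof -
  have "minor2 ?u ?V 2 4 = 22044960 * t^3 + 53257824 * t^2 - 708937920 * t + 839808000"
    "minor2 ?u ?V 3 4 = 10497600 * t^3 - 140667840 * t^2 + 446777856 * t - 268738560"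
    unfolding minor2_def plane_point_3 tangent_point_def
    by (simp_all only: vector_5 power_one mult_1_left mult_1_right; algebra)+
  then have "minor2 ?u ?V 2 4 \<noteq> 0 \<or> minor2 ?u ?V 3 4 \<noteq> 0"
    by algebra
  then show ?thesis
    using lin_indep2_if_minor2 by blast
qed

text \<open>The coefficients \<alpha>, \<beta> come from reducing modulo flag_quartic 1 t; the identity below
  holds only at its roots.\<close>
lemma plane_point_minus_1_in_flag_X:
  assumes "flag_quartic 1 t = 0"
  shows "plane_point (-1) 1 t \<in> flag_X 1 t"
proof -
  define \<alpha> where
    "\<alpha> = 93722572800 * t^3 + 500579315712 * t^2 + 1176308987904 * t - 3247436759040"
  define \<beta> where "\<beta> = 51925 * t^3 + 276450 * t^2 + 656925 * t - 1783600"
  have "13824 *s plane_point (-1) 1 t = \<alpha> *s tangent_point 4 1 t + \<beta> *s plane_point 3 1 t"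
    using assms
    unfolding \<alpha>_def \<beta>_def flag_quartic_def plane_point_3 plane_point_minus_1 tangent_point_def
    by (intro vec_eq_5I; simp only: vector_add_component vector_smult_component vector_5
        power_one mult_1_left mult_1_right; algebra)
  then have
    "plane_point (-1) 1 t = (1 / 13824) *s (\<alpha> *s tangent_point 4 1 t + \<beta> *s plane_point 3 1 t)"
    by (metis vector_smult_assoc nonzero_divide_eq_eq vector_smult_lid zero_neq_numeral)
  then show ?thesis
    unfolding flag_X_def by (auto intro: vec.span_scale vec.span_add vec.span_base)
qed

definition schubert_solution :: "(complex^5) set \<Rightarrow> (complex^5) set \<Rightarrow> bool" where
  "schubert_solution X Y \<longleftrightarrow> flag23 X Y
     \<and> meets X (K 2 4) \<and> meets X (K 3 3) \<and> meets X (K 3 (-1))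
     \<and> vec.dim (Y \<inter> K 3 0) \<ge> 2
     \<and> meets Y (K 2 1) \<and> meets Y (K 2 (-5))"

lemma solution_in_hyperplane:
  assumes "schubert_solution X Y"
  obtains a b where "a \<noteq> 0 \<or> b \<noteq> 0" "\<forall>v\<in>Y. a * v $ 5 = b * v $ 4"
proof -
  have Y: "vec.subspace Y" "vec.dim Y \<le> vec.dim (Y \<inter> {v. v $ 4 = 0 \<and> v $ 5 = 0}) + 1"
    using assms by (auto simp: schubert_solution_def flag23_def K3_0_eq)
  obtain \<beta> where \<beta>: "\<beta> \<in> Y" "\<beta> \<in> K 2 1" "\<beta> \<noteq> 0"
    using assms Y(1) by (auto simp: schubert_solution_def elim: meetsE)
  then have "\<beta> \<notin> {v. v $ 4 = 0 \<and> v $ 5 = 0}"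
    using K2_inter_K3_0[of 1 \<beta>] by auto
  then show thesis
    using that[of "\<beta> $ 4" "\<beta> $ 5"] coordinate_pairs_proportional[OF Y \<beta>(1)] by auto
qed

lemma solution_generators:
  assumes "schubert_solution X Y" "a \<noteq> 0 \<or> b \<noteq> 0" "\<forall>v\<in>Y. a * v $ 5 = b * v $ 4"
  shows "Y = flag_Y a b" "tangent_point 4 a b \<in> X"
    and "plane_point 3 a b \<in> X" "plane_point (-1) a b \<in> X"
proof -
  have X: "vec.subspace X" "X \<subseteq> Y" and Y: "vec.subspace Y" "vec.dim Y = 3"
    using assms(1) by (auto simp: schubert_solution_def flag23_def)
  have "tangent_point 1 a b \<in> Y" "tangent_point (-5) a b \<in> Y"
    using assms Y(1) by (auto simp: schubert_solution_def intro: tangent_point_mem)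
  moreover have "\<forall>v\<in>X. a * v $ 5 = b * v $ 4"
    using X(2) assms(3) by blast
  then show "tangent_point 4 a b \<in> X"
    using assms(1,2) X(1) by (intro tangent_point_mem) (auto simp: schubert_solution_def)
  ultimately show Y_eq: "Y = flag_Y a b"
    unfolding flag_Y_def using X(2) Y assms(2)
    by (intro vec_subspace_eq_span_3 tangent_points_lin_indep) auto
  have "X \<subseteq> vec.span {tangent_point 1 a b, tangent_point (-5) a b, tangent_point 4 a b}"
    using X(2) Y_eq by (simp add: flag_Y_def)
  then show "plane_point 3 a b \<in> X" "plane_point (-1) a b \<in> X"
    unfolding plane_point_def using X(1) assms(1) plane_coeffs_nonzero[OF assms(2)]
    by (auto simp: schubert_solution_def intro!: K3_meet_mem)
qed

lemma solution_hyperplane_quartic: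
  assumes "schubert_solution X Y" "a \<noteq> 0 \<or> b \<noteq> 0" "\<forall>v\<in>Y. a * v $ 5 = b * v $ 4"
  shows "a \<noteq> 0 \<and> flag_quartic a b = 0"
proof -
  have "vec.dim X = 2"
    using assms(1) by (simp add: schubert_solution_def flag23_def)
  with solution_generators[OF assms] show ?thesis
    by (intro flag_quartic_if_minors_vanish assms(2) minor3_eq_0_if_dim_2) auto
qed

lemma solution_eq_flag:
  assumes "schubert_solution X Y"
  obtains t where "flag_quartic 1 t = 0" "X = flag_X 1 t" "Y = flag_Y 1 t"
proof -
  obtain a b where ab: "a \<noteq> 0 \<or> b \<noteq> 0" "\<forall>v\<in>Y. a * v $ 5 = b * v $ 4"
    using solution_in_hyperplane[OF assms] .
  then have "a \<noteq> 0"
    using solution_hyperplane_quartic[OF assms] by blast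
  define t where "t = b / a"
  have hyperplane: "\<forall>v\<in>Y. 1 * v $ 5 = t * v $ 4"
    using ab(2) \<open>a \<noteq> 0\<close> by (auto simp: t_def field_simps)
  note generators = solution_generators[OF assms _ hyperplane]
  have "X = flag_X 1 t"
    using assms generators unfolding flag_X_def
    by (intro vec_subspace_eq_span_2 flag_X_generators_lin_indep)
      (auto simp: schubert_solution_def flag23_def)
  moreover have "flag_quartic 1 t = 0"
    using solution_hyperplane_quartic[OF assms _ hyperplane] by simp
  ultimately show thesis
    using that generators by simp
qed

lemma flag_Y_meets_K3_0: "2 \<le> vec.dim (flag_Y 1 t \<inter> K 3 0)"
proof -
  define y1 where "y1 = tangent_point (-5) 1 t - 625 *s tangent_point 1 1 t"
  define y2 where "y2 = tangent_point 4 1 t - 256 *s tangent_point 1 1 t"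
  have indep: "lin_indep3 (tangent_point 1 1 t) (tangent_point (-5) 1 t) (tangent_point 4 1 t)"
    by (simp add: tangent_points_lin_indep)
  have "lin_indep2 y1 y2"
    unfolding lin_indep2_def
  proof (intro allI impI)
    fix c d assume "c *s y1 + d *s y2 = 0"
    have "(- 625 * c - 256 * d) *s tangent_point 1 1 t + c *s tangent_point (-5) 1 t
        + d *s tangent_point 4 1 t = c *s y1 + d *s y2"
      by (simp add: y1_def y2_def vec_eq_iff ring_distribs)
    also note \<open>c *s y1 + d *s y2 = 0\<close>
    finally show "c = 0 \<and> d = 0"
      using indep unfolding lin_indep3_def by blast
  qed
  moreover have "{y1, y2} \<subseteq> flag_Y 1 t \<inter> K 3 0"
    by (auto simp: y1_def y2_def flag_Y_def K3_0_eq tangent_point_def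
        intro: vec.span_diff vec.span_scale vec.span_base)
  ultimately show ?thesis
    using vec.dim_subset[of "{y1, y2}" "flag_Y 1 t \<inter> K 3 0"] vec_dim_span_2[of y1 y2] by simp
qed

lemma flag_is_solution:
  assumes "flag_quartic 1 t = 0"
  shows "schubert_solution (flag_X 1 t) (flag_Y 1 t)"
proof -
  have indep: "lin_indep3 (tangent_point 1 1 t) (tangent_point (-5) 1 t) (tangent_point 4 1 t)"
    by (simp add: tangent_points_lin_indep)
  have gens: "tangent_point 4 1 t \<in> flag_X 1 t" "plane_point 3 1 t \<in> flag_X 1 t"
    "tangent_point 1 1 t \<in> flag_Y 1 t" "tangent_point (-5) 1 t \<in> flag_Y 1 t"
    by (simp_all add: flag_X_def flag_Y_def vec.span_base)
  have "plane_point 3 1 t \<in> flag_Y 1 t"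
    unfolding plane_point_def flag_Y_def by (rule K3_meet_in_span)
  then have "flag_X 1 t \<subseteq> flag_Y 1 t"
    unfolding flag_X_def by (intro vec.span_minimal) (auto simp: flag_Y_def vec.span_base)
  then have "flag23 (flag_X 1 t) (flag_Y 1 t)"
    using vec_dim_span_2[OF flag_X_generators_lin_indep] vec_dim_span_3[OF indep]
    by (simp add: flag23_def flag_X_def flag_Y_def)
  moreover have "plane_point s 1 t \<in> K 3 s" "plane_point s 1 t \<noteq> 0" if "s = 3 \<or> s = -1" for s
    unfolding plane_point_def
    by (rule K3_meet_in_K3, rule K3_meet_nonzero[OF indep plane_coeffs_nonzero]) (simp_all add: that)
  then have "meets (flag_X 1 t) (K 3 3)" "meets (flag_X 1 t) (K 3 (-1))"
    using gens(2) plane_point_minus_1_in_flag_X[OF assms] by (auto intro: meetsI)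
  moreover have "meets (flag_X 1 t) (K 2 4)" "meets (flag_Y 1 t) (K 2 1)" "meets (flag_Y 1 t) (K 2 (-5))"
    by (rule meetsI[OF gens(1) tangent_point_in_K2 tangent_point_nonzero], simp, simp,
        rule meetsI[OF gens(3) tangent_point_in_K2 tangent_point_nonzero], simp, simp,
        rule meetsI[OF gens(4) tangent_point_in_K2 tangent_point_nonzero], simp, simp)
  ultimately show ?thesis
    by (simp add: schubert_solution_def flag_Y_meets_K3_0)
qed

lemma flag_Y_subset_hyperplane: "flag_Y a b \<subseteq> {v. a * v $ 5 = b * v $ 4}"
  unfolding flag_Y_def
  by (intro vec.span_minimal) (auto simp: tangent_point_in_hyperplane vec.subspace_def algebra_simps)

lemma flag_Y_inj:
  assumes "flag_Y 1 s = flag_Y 1 t"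
  shows "s = t"
proof -
  have "tangent_point 1 1 s \<in> flag_Y 1 s"
    unfolding flag_Y_def by (rule vec.span_base) simp
  then have "tangent_point 1 1 s \<in> flag_Y 1 t"
    using assms by simp
  then show ?thesis
    using flag_Y_subset_hyperplane[of 1 t] by (auto simp: tangent_point_def)
qed

lemma real_flag_iff: "real_subspace (flag_X 1 t) \<and> real_subspace (flag_Y 1 t) \<longleftrightarrow> t \<in> \<real>"
proof
  assume "real_subspace (flag_X 1 t) \<and> real_subspace (flag_Y 1 t)"
  then obtain S where "\<forall>v\<in>S. \<forall>j. Im (v $ j) = 0" "flag_Y 1 t = vec.span S"
    by (auto simp: real_subspace_def)
  moreover have "tangent_point 1 1 t \<in> flag_Y 1 t"
    by (simp add: flag_Y_def vec.span_base)
  ultimately have "vec_cnj (tangent_point 1 1 t) \<in> flag_Y 1 t"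
    using vec_cnj_in_span by blast
  then have "cnj t = t"
    using flag_Y_subset_hyperplane[of 1 t] by (auto simp: vec_cnj_def tangent_point_def)
  then show "t \<in> \<real>"
    using Reals_cnj_iff by blast
next
  assume "t \<in> \<real>"
  then have "\<forall>j. Im (v $ j) = 0"
    if "v \<in> {tangent_point 1 1 t, tangent_point (-5) 1 t, tangent_point 4 1 t, plane_point 3 1 t}" for v
    using that by (auto simp: forall_5 tangent_point_def plane_point_3 complex_is_Real_iff[symmetric])
  then show "real_subspace (flag_X 1 t) \<and> real_subspace (flag_Y 1 t)"
    unfolding real_subspace_def flag_X_def flag_Y_def
    by (intro conjI exI[of _ "{tangent_point 4 1 t, plane_point 3 1 t}"]
        exI[of _ "{tangent_point 1 1 t, tangent_point (-5) 1 t, tangent_point 4 1 t}"]) auto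
qed

lemma solutions_eq_image:
  "{(X, Y). schubert_solution X Y} = (\<lambda>t. (flag_X 1 t, flag_Y 1 t)) ` {t. flag_quartic 1 t = 0}"
  using flag_is_solution by (auto elim!: solution_eq_flag)

section \<open>Roots of the quartic\<close>

lemma complex_quadratic_nonreal_roots:
  fixes a b c :: real
  assumes "0 < a" "b^2 < 4 * a * c"
  obtains z where "Im z \<noteq> 0"
    "\<And>t. of_real a * t^2 + of_real b * t + of_real c = 0 \<longleftrightarrow> t = z \<or> t = cnj z"
proof -
  define w where "w = sqrt (4 * a * c - b^2)"
  have "0 < w" "w^2 = 4 * a * c - b^2"
    using assms(2) by (simp_all add: w_def)
  define z where "z = Complex (- b / (2 * a)) (w / (2 * a))"
  have sums: "z + cnj z = - (of_real b / of_real a)" "z * cnj z = of_real c / of_real a"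
    using assms(1) \<open>w^2 = 4 * a * c - b^2\<close>
    by (simp_all add: z_def complex_eq_iff complex_mult_cnj field_simps power2_eq_square)
  have "of_real a * t^2 + of_real b * t + of_real c = of_real a * ((t - z) * (t - cnj z))"
    for t :: complex
  proof -
    have "(t - z) * (t - cnj z) = t^2 - (z + cnj z) * t + z * cnj z"
      by (simp add: algebra_simps power2_eq_square)
    also have "\<dots> = t^2 + of_real b / of_real a * t + of_real c / of_real a"
      unfolding sums by simp
    finally show ?thesis
      using assms(1) by (simp add: field_simps)
  qed
  moreover have "Im z \<noteq> 0"
    using \<open>0 < w\<close> assms(1) by (simp add: z_def)
  ultimately show thesis
    using that assms(1) by simp
qed

lemma flag_quartic_real_roots:
  obtains r1 r2 :: real
  where "1 \<le> r1" "r1 \<le> 2" "3 \<le> r2" "flag_quartic 1 r1 = 0" "flag_quartic 1 r2 = 0"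
proof -
  have cont: "continuous_on S (flag_quartic 1 :: real \<Rightarrow> real)" for S
    unfolding flag_quartic_def by (intro continuous_intros)
  have "\<exists>r1. 1 \<le> r1 \<and> r1 \<le> 2 \<and> flag_quartic 1 r1 = (0::real)"
    by (rule IVT2'[OF _ _ _ cont]) (simp_all add: flag_quartic_def)
  moreover have "\<exists>r2. 3 \<le> r2 \<and> r2 \<le> 4 \<and> flag_quartic 1 r2 = (0::real)"
    by (rule IVT'[OF _ _ _ cont]) (simp_all add: flag_quartic_def)
  ultimately show thesis
    using that by blast
qed

lemma flag_quartic_factor:
  fixes r1 r2 t :: complex
  assumes "flag_quartic 1 r1 = 0" "flag_quartic 1 r2 = 0" "r1 \<noteq> r2"
  shows "flag_quartic 1 t = (t - r1) * (t - r2)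
    * (31 * t^2 + (54 + 31 * (r1 + r2)) * t + (- 201 + 54 * (r1 + r2) + 31 * (r1^2 + r1 * r2 + r2^2)))"
proof -
  define D where "D = 31 * r2^3 + (54 + 31 * r1) * r2^2 + (- 201 + 54 * r1 + 31 * r1^2) * r2
      + (- 2464 - 201 * r1 + 54 * r1^2 + 31 * r1^3)"
  have division: "flag_quartic 1 x = (x - r1) * ((x - r2) * (31 * x^2 + (54 + 31 * (r1 + r2)) * x
      + (- 201 + 54 * (r1 + r2) + 31 * (r1^2 + r1 * r2 + r2^2))) + D) + flag_quartic 1 r1" for x
    unfolding D_def flag_quartic_def power_one mult_1_right by algebra
  from division[of r2] assms have "D = 0"
    by simp
  with division[of t] assms(1) show ?thesis
    by simp
qed

lemma flag_quartic_of_real: "flag_quartic (of_real a) (of_real b) = of_real (flag_quartic a b)"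
  by (simp add: flag_quartic_def)

lemma flag_quartic_roots:
  "card {t::complex. flag_quartic 1 t = 0 \<and> t \<in> \<real>} = 2"
  "card {t::complex. flag_quartic 1 t = 0 \<and> t \<notin> \<real>} = 2"
proof -
  obtain r1 r2 :: real where r: "1 \<le> r1" "r1 \<le> 2" "3 \<le> r2"
    and roots: "flag_quartic 1 r1 = 0" "flag_quartic 1 r2 = 0"
    using flag_quartic_real_roots .
  define B where "B = 54 + 31 * (r1 + r2)"
  define C where "C = - 201 + 54 * (r1 + r2) + 31 * (r1^2 + r1 * r2 + r2^2)"
  have "B^2 < 4 * 31 * C"
  proof -
    have "4 * 31 * C - B^2 = 1922 * (r1 + r2)^2 + 3348 * (r1 + r2) - 27840 + 961 * (r1 - r2)^2"
      unfolding B_def C_def by algebra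
    moreover have "16 \<le> (r1 + r2)^2"
      using r power_mono[of 4 "r1 + r2" 2] by simp
    ultimately show ?thesis
      using r by (smt (verit) zero_le_power2)
  qed
  then obtain z where z: "Im z \<noteq> 0"
    and quadratic: "\<And>t. 31 * t^2 + of_real B * t + of_real C = 0 \<longleftrightarrow> t = z \<or> t = cnj z"
    using complex_quadratic_nonreal_roots[of 31 B C] by auto
  have "flag_quartic 1 (of_real r :: complex) = 0" if "flag_quartic 1 r = 0" for r
    using that flag_quartic_of_real[of 1 r] by simp
  then have factor: "flag_quartic 1 t
      = (t - of_real r1) * (t - of_real r2) * (31 * t^2 + of_real B * t + of_real C)"
    for t :: complex
    using flag_quartic_factor[of "of_real r1" "of_real r2"] roots r by (simp add: B_def C_def)
  have "{t::complex. flag_quartic 1 t = 0 \<and> t \<in> \<real>} = {of_real r1, of_real r2}"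
    "{t::complex. flag_quartic 1 t = 0 \<and> t \<notin> \<real>} = {z, cnj z}"
    using z by (auto simp: factor quadratic complex_is_Real_iff)
  then show "card {t::complex. flag_quartic 1 t = 0 \<and> t \<in> \<real>} = 2"
    "card {t::complex. flag_quartic 1 t = 0 \<and> t \<notin> \<real>} = 2"
    using r z by (auto simp: complex_eq_iff)
qed

theorem mainTheorem16:
  defines "sols \<equiv> {(X, Y). flag23 X Y
      \<and> meets X (K 2 4) \<and> meets X (K 3 3) \<and> meets X (K 3 (-1))
      \<and> vec.dim (Y \<inter> K 3 0) \<ge> 2
      \<and> meets Y (K 2 1) \<and> meets Y (K 2 (-5))}"
  shows "card sols = 4
    \<and> card {(X, Y) \<in> sols. real_subspace X \<and> real_subspace Y} = 2
    \<and> card {(X, Y) \<in> sols. \<not> (real_subspace X \<and> real_subspace Y)} = 2"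
proof -
  define F where "F t = (flag_X 1 t, flag_Y 1 t)" for t
  define roots where "roots P = {t. flag_quartic 1 t = 0 \<and> P t}" for P :: "complex \<Rightarrow> bool"
  have inj: "inj F"
    using flag_Y_inj by (auto intro!: injI simp: F_def)
  have "sols = F ` roots (\<lambda>_. True)"
    using solutions_eq_image by (simp add: sols_def schubert_solution_def F_def roots_def)
  then have "{(X, Y) \<in> sols. real_subspace X \<and> real_subspace Y} = F ` roots (\<lambda>t. t \<in> \<real>)"
    "{(X, Y) \<in> sols. \<not> (real_subspace X \<and> real_subspace Y)} = F ` roots (\<lambda>t. t \<notin> \<real>)"
    "sols = F ` roots (\<lambda>t. t \<in> \<real>) \<union> F ` roots (\<lambda>t. t \<notin> \<real>)"
    by (auto simp: F_def roots_def real_flag_iff[symmetric])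
  moreover have "card (F ` roots (\<lambda>t. t \<in> \<real>)) = 2" "card (F ` roots (\<lambda>t. t \<notin> \<real>)) = 2"
    using flag_quartic_roots by (simp_all add: card_image[OF inj_on_subset[OF inj]] roots_def)
  moreover have "F ` roots (\<lambda>t. t \<in> \<real>) \<inter> F ` roots (\<lambda>t. t \<notin> \<real>) = {}"
    using inj by (auto simp: roots_def inj_eq)
  ultimately show ?thesis
    by (simp add: card_Un_disjoint card_ge_0_finite)
qed

end
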